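(* Let $p_0$ be a probability density on $\mathbb{R}^d$ and let $\boldsymbol{\phi}_t,\boldsymbol{\phi}^\theta_t:\mathbb{R}^d\to\mathbb{R}^d$, $t\in[0,1]$, be two vector fields. Let $\mathbf{x}_t$ solve $\frac{\mathrm{d}\mathbf{x}_t}{\mathrm{d}t}=\boldsymbol{\phi}_t(\mathbf{x}_t)$ with $\mathbf{x}_0\sim p_0$, let $p_t$ denote the law of $\mathbf{x}_t$, and let $p_{\mathbf{x}_1}$ be the law of $\mathbf{x}_1=\mathbf{x}_0+\int_0^1\boldsymbol{\phi}_t(\mathbf{x}_t)\,\mathrm{d}t$. Define the approximation error $\delta\ge 0$ by $\delta^2 = \int_0^1\mathbb{E}_{\mathbf{x}\sim p_t}\big[\|\boldsymbol{\phi}^\theta_t(\mathbf{x})-\boldsymbol{\phi}_t(\mathbf{x})\|^2\big]\,\mathrm{d}t$. Let $n\in\mathbb{N}$, $h=1/n$, and define the discretized process $\hat{\mathbf{x}}^\theta_0\sim p_0$, $$\hat{\mathbf{x}}^\theta_{(k+1)h} = \hat{\mathbf{x}}^\theta_{kh} + h\,\boldsymbol{\phi}^\theta_{kh}(\hat{\mathbf{x}}^\theta_{kh}),\qquad k=0,\dots,n-1,$$ with $p_{\hat{\mathbf{x}}^\theta_1}$ the law of $\hat{\mathbf{x}}^\theta_1$. Assume: (1) there is $K_1<\infty$ with $\|\boldsymbol{\phi}_t(\mathbf{x}_1)-\boldsymbol{\phi}_t(\mathbf{x}_2)\|\le K_1\|\mathbf{x}_1-\mathbf{x}_2\|$ and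 $\|\boldsymbol{\phi}^\theta_t(\mathbf{x}_1)-\boldsymbol{\phi}^\theta_t(\mathbf{x}_2)\|\le K_1\|\mathbf{x}_1-\mathbf{x}_2\|$ for all $\mathbf{x}_1,\mathbf{x}_2\in\mathbb{R}^d$, $t\in[0,1]$; (2) there is $K_2<\infty$ with $\|\boldsymbol{\phi}^\theta_{t_1}(\mathbf{x})-\boldsymbol{\phi}^\theta_{t_2}(\mathbf{x})\|\le K_2|t_2-t_1|$ for all $\mathbf{x}$ and $t_1,t_2\in[0,1]$; (3) there is $K_3<\infty$ with $\|\boldsymbol{\phi}^\theta_t(\mathbf{x})\|\le K_3$ for all $\mathbf{x}$, $t\in[0,1]$. Then $$W_2\big(p_{\hat{\mathbf{x}}^\theta_1},p_{\mathbf{x}_1}\big)\le \delta\sqrt{\exp(1+2K_1)} + \sqrt{h}\sqrt{\frac{C\big(\exp(1+K_1^2)-1\big)}{1+K_1^2}},$$ where $C=\frac12K_2^2+\frac{17}{2}K_1^2K_3^2+5K_1K_2K_3$.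
   Context: $W_2(p,q)=\big(\inf_{\gamma\in\Gamma(p,q)}\mathbb{E}_{(\mathbf{x},\mathbf{y})\sim\gamma}\|\mathbf{x}-\mathbf{y}\|^2\big)^{1/2}$ is the 2-Wasserstein distance, where $\Gamma(p,q)$ is the set of couplings of $p$ and $q$; $\|\cdot\|$ is the Euclidean norm. *)

theory Defs
  imports "HOL-Probability.Probability"
begin

definition couplings :: "'a::euclidean_space measure \<Rightarrow> 'a measure \<Rightarrow> ('a \<times> 'a) measure set" where
  "couplings p q = {\<gamma>. prob_space \<gamma> \<and> sets \<gamma> = sets (borel :: ('a \<times> 'a) measure) \<and>
                        distr \<gamma> borel fst = p \<and> distr \<gamma> borel snd = q}"

definition W2_sq :: "'a::euclidean_space measure \<Rightarrow> 'a measure \<Rightarrow> ennreal" where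
  "W2_sq p q = (INF \<gamma> \<in> couplings p q. \<integral>\<^sup>+ z. ennreal ((norm (fst z - snd z))\<^sup>2) \<partial>\<gamma>)"

definition W2 :: "'a::euclidean_space measure \<Rightarrow> 'a measure \<Rightarrow> ennreal" where
  "W2 p q = (if W2_sq p q = \<infinity> then \<infinity> else ennreal (sqrt (enn2real (W2_sq p q))))"

fun euler :: "(real \<Rightarrow> 'a::real_normed_vector \<Rightarrow> 'a) \<Rightarrow> real \<Rightarrow> nat \<Rightarrow> 'a \<Rightarrow> 'a" where
  "euler phi h 0 x = x"
| "euler phi h (Suc k) x = euler phi h k x + h *\<^sub>R phi (real k * h) (euler phi h k x)"

end

theory Submission
  imports Defs
begin

(*
  On each step [kh, (k+1)h] compare the flow with the linear interpolation
  y_k + (s - kh) phi\<theta>(kh, y_k) of the Euler step. The defect grows at rate at most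
  K1 |defect| + kappa (s - kh) + |phi\<theta> - phi|(s, X_s), with kappa = K2 + K1 K3, so a
  Gronwall argument gives, for every initial point,
    |Euler_1 - X_1| <= kappa h sqrt (Gamma / 3) + exp K1 * int_0^1 |phi\<theta> - phi|(s, X_s) ds,
  where Gamma = (exp (1 + K1^2) - 1) / (1 + K1^2). Squaring with the weights (1 + t, 1 + 1/t),
  applying Cauchy-Schwarz in time, integrating against p0 (Tonelli) and optimizing t bounds
  the mean squared error by (kappa h sqrt (Gamma / 3) + exp K1 * delta)^2. Driving the
  scheme and the flow from the same initial point is a coupling, which bounds W2.
*)

lemma has_real_derivative_inner_self:
  fixes e :: "real \<Rightarrow> 'a::real_inner"
  assumes "(e has_vector_derivative e') (at t within S)"
  shows "((\<lambda>s. e s \<bullet> e s) has_real_derivative 2 * (e t \<bullet> e')) (at t within S)"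
proof -
  have d: "(e has_derivative (\<lambda>h. h *\<^sub>R e')) (at t within S)"
    using assms by (simp add: has_vector_derivative_def)
  show ?thesis
    unfolding has_field_derivative_def
    by (rule has_derivative_eq_rhs[OF has_derivative_inner[OF d d]])
      (auto simp: algebra_simps inner_commute fun_eq_iff)
qed

text \<open>The norm is not differentiable at \<open>0\<close>,
  so the proof differentiates \<open>exp (-c t) sqrt (\<parallel>e t\<parallel>\<^sup>2 + \<epsilon>\<^sup>2)\<close> instead and lets \<open>\<epsilon> \<rightarrow> 0\<close>.\<close>
lemma exp_weighted_norm_le_integral:
  fixes e e' :: "real \<Rightarrow> 'a::real_inner" and w :: "real \<Rightarrow> real"
  assumes "a \<le> b" and "c \<ge> 0"
    and e_deriv: "\<And>t. t \<in> {a..b} \<Longrightarrow> (e has_vector_derivative e' t) (at t within {a..b})"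
    and w_integral: "(w has_integral I) {a..b}"
    and growth: "\<And>t. t \<in> {a..b} \<Longrightarrow> exp (- c * t) * (norm (e' t) - c * norm (e t)) \<le> w t"
  shows "exp (- c * b) * norm (e b) \<le> exp (- c * a) * norm (e a) + I"
proof -
  have smoothed: "exp (- c * b) * norm (e b) \<le> exp (- c * a) * (norm (e a) + \<epsilon>) + I"
    if "\<epsilon> > 0" for \<epsilon>
  proof -
    define N where "N t = sqrt (e t \<bullet> e t + \<epsilon>\<^sup>2)" for t
    define N' where "N' t = (e t \<bullet> e' t) / N t" for t
    define G where "G t = exp (- c * t) * N t" for t
    define G' where "G' t = exp (- c * t) * (N' t - c * N t)" for t
    have N_pos: "N t > 0" for t
      unfolding N_def using \<open>\<epsilon> > 0\<close> by (intro real_sqrt_gt_zero add_nonneg_pos) auto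
    have norm_le_N: "norm (e t) \<le> N t" for t
      unfolding N_def by (rule real_le_rsqrt) (auto simp: power2_norm_eq_inner)
    have G_deriv: "(G has_vector_derivative G' t) (at t within {a..b})" if "t \<in> {a..b}" for t
    proof -
      have "(N has_real_derivative inverse (N t) / 2 * (2 * (e t \<bullet> e' t))) (at t within {a..b})"
        unfolding N_def
        by (rule DERIV_chain2[OF DERIV_real_sqrt])
          (use \<open>\<epsilon> > 0\<close> has_real_derivative_inner_self[OF e_deriv[OF that]] in
            \<open>auto intro!: add_nonneg_pos derivative_eq_intros\<close>)
      then have "(N has_real_derivative N' t) (at t within {a..b})"
        by (simp add: N'_def field_simps)
      then have "(G has_real_derivative G' t) (at t within {a..b})"
        unfolding G_def G'_def by (auto intro!: derivative_eq_intros simp: algebra_simps)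
      then show ?thesis by (simp add: has_real_derivative_iff_has_vector_derivative)
    qed
    have "G' t \<le> w t" if "t \<in> {a..b}" for t
    proof -
      have "e t \<bullet> e' t \<le> N t * norm (e' t)"
        using Cauchy_Schwarz_ineq2[of "e t" "e' t"] norm_le_N[of t]
        by (smt (verit, best) mult_right_mono norm_ge_zero)
      then have "N' t \<le> norm (e' t)"
        using N_pos[of t] by (simp add: N'_def divide_le_eq mult.commute)
      moreover have "c * norm (e t) \<le> c * N t"
        using norm_le_N \<open>c \<ge> 0\<close> by (simp add: mult_left_mono)
      ultimately have "G' t \<le> exp (- c * t) * (norm (e' t) - c * norm (e t))"
        unfolding G'_def by (intro mult_left_mono) auto
      also have "\<dots> \<le> w t" by (rule growth[OF that])
      finally show ?thesis .
    qed
    then have "G b - G a \<le> I"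
      using has_integral_le[OF fundamental_theorem_of_calculus[OF \<open>a \<le> b\<close> G_deriv] w_integral]
      by blast
    moreover have "N a \<le> norm (e a) + \<epsilon>"
      unfolding N_def using sqrt_add_le_add_sqrt[of "(norm (e a))\<^sup>2" "\<epsilon>\<^sup>2"] \<open>\<epsilon> > 0\<close>
      by (simp add: norm_eq_sqrt_inner)
    ultimately show ?thesis
      unfolding G_def using norm_le_N[of b]
      by (smt (verit, best) exp_gt_zero mult_left_mono)
  qed
  show ?thesis
  proof (rule field_le_epsilon)
    fix d :: real
    assume "d > 0"
    then show "exp (- c * b) * norm (e b) \<le> exp (- c * a) * norm (e a) + I + d"
      using smoothed[of "d / exp (- c * a)"] by (simp add: algebra_simps)
  qed
qed

lemma continuous_on_uncurry_of_lipschitz: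
  fixes F :: "'t::metric_space \<Rightarrow> 'b::metric_space \<Rightarrow> 'c::metric_space"
  assumes cont: "\<And>x. continuous_on UNIV (\<lambda>t. F t x)"
    and lip: "\<And>t x y. dist (F t x) (F t y) \<le> L * dist x y"
  shows "continuous_on UNIV (\<lambda>p. F (fst p) (snd p))"
proof -
  have "((\<lambda>q. F (fst q) (snd q)) \<longlongrightarrow> F t x) (at (t, x))" for t x
  proof -
    have "((\<lambda>q. F (fst q) x) \<longlongrightarrow> F t x) (at (t, x))"
      using cont[of x] tendsto_fst[OF tendsto_ident_at[of "(t, x)" UNIV]]
      by (auto simp: continuous_on_eq_continuous_at intro: isCont_tendsto_compose)
    moreover have "((\<lambda>q. snd q) \<longlongrightarrow> x) (at (t, x))"
      using tendsto_snd[OF tendsto_ident_at[of "(t, x)" UNIV]] by simp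
    ultimately have "((\<lambda>q. L * dist (snd q) x + dist (F (fst q) x) (F t x)) \<longlongrightarrow> L * 0 + 0) (at (t, x))"
      by (intro tendsto_intros) (auto simp flip: tendsto_dist_iff)
    then have majorant: "((\<lambda>q. L * dist (snd q) x + dist (F (fst q) x) (F t x)) \<longlongrightarrow> 0) (at (t, x))"
      by simp
    have "((\<lambda>q. dist (F (fst q) (snd q)) (F t x)) \<longlongrightarrow> 0) (at (t, x))"
    proof (rule tendsto_sandwich[OF _ _ tendsto_const majorant])
      have "dist (F s y) (F t x) \<le> L * dist y x + dist (F s x) (F t x)" for s y
        using dist_triangle[of "F s y" "F t x" "F s x"] lip[of s y x] by linarith
      then show "\<forall>\<^sub>F q in at (t, x). dist (F (fst q) (snd q)) (F t x)
          \<le> L * dist (snd q) x + dist (F (fst q) x) (F t x)"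
        by (simp add: always_eventually)
    qed simp
    then show ?thesis by (rule tendsto_dist_iff[THEN iffD2])
  qed
  then have "isCont (\<lambda>p. F (fst p) (snd p)) p" for p
    by (cases p) (simp only: isCont_def fst_conv snd_conv)
  then show ?thesis
    by (simp add: continuous_on_eq_continuous_at)
qed

lemma sq_sum_le_weighted:
  fixes x y t :: real
  assumes "t > 0"
  shows "(x + y)\<^sup>2 \<le> (1 + t) * x\<^sup>2 + (1 + 1 / t) * y\<^sup>2"
proof -
  have "0 \<le> (t * x - y)\<^sup>2 / t" using assms by simp
  then show ?thesis using assms by (simp add: field_simps power2_eq_square)
qed

lemma le_sq_sum_of_weighted_bounds:
  fixes E :: ennreal and P a :: real
  assumes "P \<ge> 0" "a \<ge> 0"
    and bound: "\<And>t. t > 0 \<Longrightarrow> E \<le> ennreal ((1 + t) * P\<^sup>2 + (1 + 1 / t) * a\<^sup>2)"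
  shows "E \<le> ennreal ((P + a)\<^sup>2)"
proof -
  have perturbed: "E \<le> ennreal ((P + a + 2 * \<epsilon>) * (P + a))" if "\<epsilon> > 0" for \<epsilon>
  proof -
    \<comment> \<open>the optimal weight \<open>a / P\<close>, perturbed to avoid division by zero\<close>
    define t where "t = (a + \<epsilon>) / (P + \<epsilon>)"
    have "t > 0" unfolding t_def using assms that by simp
    have "(1 + t) * P\<^sup>2 = (P + a + 2 * \<epsilon>) * P * (P / (P + \<epsilon>))"
      unfolding t_def using assms that by (simp add: field_simps power2_eq_square)
    also have "\<dots> \<le> (P + a + 2 * \<epsilon>) * P"
      using assms that by (intro mult_left_le) auto
    finally have P_part: "(1 + t) * P\<^sup>2 \<le> (P + a + 2 * \<epsilon>) * P" .
    have "(1 + 1 / t) * a\<^sup>2 = (P + a + 2 * \<epsilon>) * a * (a / (a + \<epsilon>))"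
      unfolding t_def using assms that by (simp add: field_simps power2_eq_square)
    also have "\<dots> \<le> (P + a + 2 * \<epsilon>) * a"
      using assms that by (intro mult_left_le) auto
    finally have "(1 + t) * P\<^sup>2 + (1 + 1 / t) * a\<^sup>2 \<le> (P + a + 2 * \<epsilon>) * (P + a)"
      using P_part by (simp add: distrib_left)
    then show ?thesis
      using bound[OF \<open>t > 0\<close>] by (meson ennreal_leI order_trans)
  qed
  show ?thesis
  proof (rule ennreal_le_epsilon)
    fix e :: real
    assume "e > 0"
    define \<epsilon> where "\<epsilon> = e / (2 * (P + a) + 1)"
    have "\<epsilon> > 0" and "2 * \<epsilon> * (P + a) \<le> e"
      using assms \<open>e > 0\<close> by (auto simp: \<epsilon>_def field_simps)
    then have "(P + a + 2 * \<epsilon>) * (P + a) \<le> (P + a)\<^sup>2 + e"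
      by (simp add: power2_eq_square algebra_simps)
    then have "E \<le> ennreal ((P + a)\<^sup>2 + e)"
      using perturbed[OF \<open>\<epsilon> > 0\<close>] ennreal_leI order_trans by blast
    then show "E \<le> ennreal ((P + a)\<^sup>2) + ennreal e"
      using \<open>e > 0\<close> by (simp add: ennreal_plus)
  qed
qed

lemma unit_interval_integral_sq_le:
  fixes u :: "real \<Rightarrow> real"
  assumes meas: "set_borel_measurable lborel {0..1} u"
    and nonneg: "\<And>s. s \<in> {0..1} \<Longrightarrow> u s \<ge> 0"
    and finite: "(\<integral>\<^sup>+ s \<in> {0..1}. ennreal ((u s)\<^sup>2) \<partial>lborel) < \<infinity>"
  shows "u integrable_on {0..1}"
    and "ennreal ((integral {0..1} u)\<^sup>2) \<le> (\<integral>\<^sup>+ s \<in> {0..1}. ennreal ((u s)\<^sup>2) \<partial>lborel)"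
proof -
  let ?S = "\<integral>\<^sup>+ s \<in> {0..1}. ennreal ((u s)\<^sup>2) \<partial>lborel"
  define g where "g s = indicator {0..1} s * u s" for s
  have g_meas [measurable]: "g \<in> borel_measurable borel"
    using meas by (simp add: set_borel_measurable_def g_def[abs_def])
  have g_nonneg: "g s \<ge> 0" for s
    using nonneg by (simp add: g_def indicator_def)
  have "(\<integral>\<^sup>+ s. ennreal (g s) * indicator {0..1} s \<partial>lborel)\<^sup>2
      \<le> (\<integral>\<^sup>+ s. ennreal (g s) ^ 2 \<partial>lborel) * (\<integral>\<^sup>+ s. (indicator {0..1::real} s) ^ 2 \<partial>lborel)"
    by (rule Cauchy_Schwarz_nn_integral) auto
  moreover have "(\<lambda>s. ennreal (g s) * indicator {0..1} s) = (\<lambda>s. ennreal (g s))"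
    and "(\<lambda>s. ennreal (g s) ^ 2) = (\<lambda>s. ennreal ((u s)\<^sup>2) * indicator {0..1} s)"
    and "(\<lambda>s. (indicator {0..1::real} s :: ennreal) ^ 2) = indicator {0..1}"
    using nonneg by (auto simp: g_def indicator_def fun_eq_iff ennreal_power)
  ultimately have sq_le: "(\<integral>\<^sup>+ s. ennreal (g s) \<partial>lborel)\<^sup>2 \<le> ?S"
    by simp
  obtain r where r: "(\<integral>\<^sup>+ s. ennreal (g s) \<partial>lborel) = ennreal r" "r \<ge> 0"
    using sq_le finite
    by (cases "\<integral>\<^sup>+ s. ennreal (g s) \<partial>lborel" rule: ennreal_cases) (auto simp: top_unique)
  have "(g has_integral r) UNIV"
    by (rule nn_integral_has_integral[OF g_meas g_nonneg r])
  moreover have "g = (\<lambda>s. if s \<in> {0..1} then u s else 0)"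
    by (auto simp: g_def fun_eq_iff)
  ultimately have u_integral: "(u has_integral r) {0..1}"
    by (simp only: has_integral_restrict_UNIV)
  then show "u integrable_on {0..1}" by blast
  show "ennreal ((integral {0..1} u)\<^sup>2) \<le> ?S"
    using sq_le r u_integral by (simp add: integral_unique ennreal_power)
qed

lemma W2_sq_distr_le:
  fixes f g :: "'b \<Rightarrow> 'a::euclidean_space"
  assumes "prob_space M" and [measurable]: "f \<in> borel_measurable M" "g \<in> borel_measurable M"
  shows "W2_sq (distr M borel f) (distr M borel g) \<le> (\<integral>\<^sup>+ x. ennreal ((norm (f x - g x))\<^sup>2) \<partial>M)"
proof -
  have pair_meas [measurable]: "(\<lambda>x. (f x, g x)) \<in> M \<rightarrow>\<^sub>M borel"
    unfolding borel_prod[symmetric] by measurable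
  have [measurable]: "fst \<in> (borel :: ('a \<times> 'a) measure) \<rightarrow>\<^sub>M borel" "snd \<in> (borel :: ('a \<times> 'a) measure) \<rightarrow>\<^sub>M borel"
    by (auto intro!: borel_measurable_continuous_onI continuous_intros)
  define \<gamma> where "\<gamma> = distr M borel (\<lambda>x. (f x, g x))"
  have "\<gamma> \<in> couplings (distr M borel f) (distr M borel g)"
    using prob_space.prob_space_distr[OF assms(1) pair_meas]
    by (simp add: couplings_def \<gamma>_def distr_distr comp_def)
  then have "W2_sq (distr M borel f) (distr M borel g) \<le> (\<integral>\<^sup>+ z. ennreal ((norm (fst z - snd z))\<^sup>2) \<partial>\<gamma>)"
    unfolding W2_sq_def by (rule INF_lower)
  also have "\<dots> = (\<integral>\<^sup>+ x. ennreal ((norm (f x - g x))\<^sup>2) \<partial>M)"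
    unfolding \<gamma>_def by (subst nn_integral_distr) auto
  finally show ?thesis .
qed

lemma W2_le_of_W2_sq_le:
  assumes "W2_sq p q \<le> ennreal (R\<^sup>2)" and "R \<ge> 0"
  shows "W2 p q \<le> ennreal R"
proof -
  have "W2_sq p q \<noteq> \<infinity>" using assms(1) by (auto simp: top_unique)
  moreover have "enn2real (W2_sq p q) \<le> R\<^sup>2"
    using enn2real_mono[OF assms(1)] by simp
  ultimately show ?thesis
    using assms(2) by (simp add: W2_def real_le_lsqrt ennreal_leI)
qed

lemma measurable_pair_of_borel:
  fixes g :: "'b::second_countable_topology \<times> 'c::second_countable_topology \<Rightarrow> ennreal"
  assumes "g \<in> borel_measurable borel" and "sets M1 = sets borel" and "sets M2 = sets borel"
  shows "g \<in> borel_measurable (M1 \<Otimes>\<^sub>M M2)"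
proof -
  have "sets (M1 \<Otimes>\<^sub>M M2) = sets (borel \<Otimes>\<^sub>M borel :: ('b \<times> 'c) measure)"
    by (rule sets_pair_measure_cong[OF assms(2,3)])
  also have "\<dots> = sets borel" by (metis borel_prod)
  finally show ?thesis using assms(1) by (simp cong: measurable_cong_sets)
qed

lemma prob_space_density_lborel:
  fixes f :: "'a::euclidean_space \<Rightarrow> real"
  assumes "f \<in> borel_measurable borel" and "(\<integral>\<^sup>+ x. ennreal (f x) \<partial>lborel) = 1"
  shows "prob_space (density lborel f)"
proof (rule prob_spaceI)
  show "emeasure (density lborel f) (space (density lborel f)) = 1"
    using assms by (simp add: emeasure_density)
qed

lemma exp_mult_le_sqrt_exp:
  fixes K \<delta> :: real
  assumes "\<delta> \<ge> 0"
  shows "exp K * \<delta> \<le> \<delta> * sqrt (exp (1 + 2 * K))"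
proof -
  have "exp K = sqrt (exp (2 * K))"
    by (rule real_sqrt_unique[symmetric]) (simp_all add: power2_eq_square flip: exp_add)
  then show ?thesis
    using assms by (simp add: mult.commute mult_left_mono)
qed

lemma clamp_unit_interval: "clamp 0 1 (s::real) \<in> {0..1}"
  using clamp_in_interval[of 0 "1::real" s] by simp

locale euler_flow =
  fixes phi phi\<theta> :: "real \<Rightarrow> 'a::euclidean_space \<Rightarrow> 'a"
    and X :: "real \<Rightarrow> 'a \<Rightarrow> 'a"
    and K1 K2 K3 :: real
  assumes flow_init: "\<And>x. X 0 x = x"
    and flow_ode: "\<And>x t. t \<in> {0..1} \<Longrightarrow>
        ((\<lambda>s. X s x) has_vector_derivative phi t (X t x)) (at t within {0..1})"
    and lip_phi: "\<And>t x1 x2. t \<in> {0..1} \<Longrightarrow> norm (phi t x1 - phi t x2) \<le> K1 * norm (x1 - x2)"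
    and lip_phi\<theta>: "\<And>t x1 x2. t \<in> {0..1} \<Longrightarrow> norm (phi\<theta> t x1 - phi\<theta> t x2) \<le> K1 * norm (x1 - x2)"
    and lip_time: "\<And>x t1 t2. t1 \<in> {0..1} \<Longrightarrow> t2 \<in> {0..1} \<Longrightarrow>
        norm (phi\<theta> t1 x - phi\<theta> t2 x) \<le> K2 * \<bar>t2 - t1\<bar>"
    and bounded: "\<And>x t. t \<in> {0..1} \<Longrightarrow> norm (phi\<theta> t x) \<le> K3"
begin

lemma K1_nonneg: "K1 \<ge> 0"
proof -
  obtain b :: 'a where "b \<in> Basis" using nonempty_Basis by blast
  then have "norm b > 0" by (simp add: nonzero_Basis)
  moreover have "0 \<le> K1 * norm (0 - b)"
    using order_trans[OF norm_ge_zero lip_phi[of 0 0 b]] by simp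
  ultimately show ?thesis by (simp add: zero_le_mult_iff)
qed

lemma K2_nonneg: "K2 \<ge> 0"
  using order_trans[OF norm_ge_zero lip_time[of 0 1 0]] by simp

lemma K3_nonneg: "K3 \<ge> 0"
  using order_trans[OF norm_ge_zero bounded[of 0 0]] by simp

definition "\<kappa> = K2 + K1 * K3"
definition "\<alpha> = 1 + K1\<^sup>2"
definition "\<Gamma> = (exp \<alpha> - 1) / \<alpha>"

lemma \<kappa>_nonneg: "\<kappa> \<ge> 0"
  using K1_nonneg K2_nonneg K3_nonneg by (simp add: \<kappa>_def)

lemma \<alpha>_pos: "\<alpha> > 0"
  by (simp add: \<alpha>_def add_pos_nonneg)

lemma \<Gamma>_pos: "\<Gamma> > 0"
  using \<alpha>_pos by (simp add: \<Gamma>_def)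

definition drift_error :: "'a \<Rightarrow> real \<Rightarrow> real" where
  "drift_error x s = norm (phi\<theta> s (X s x) - phi s (X s x))"

text \<open>AM-GM with a free parameter \<open>\<mu>\<close>; optimizing \<open>\<mu>\<close> in the end turns this into
  Cauchy-Schwarz for \<open>\<integral> exp (K1 (1 - t)) (t - a) dt\<close>, using \<open>2 K1 \<le> \<alpha>\<close>.\<close>
lemma exp_weighted_lag_le:
  assumes "\<mu> > 0" and "a \<le> t" and "t \<le> 1"
  shows "exp (- K1 * t) * (\<kappa> * (t - a))
    \<le> exp (- K1) * \<kappa> / 2 * (\<mu> * exp (\<alpha> * (1 - t)) + (t - a)\<^sup>2 / \<mu>)"
proof -
  define E where "E = exp (K1 * (1 - t))"
  have "2 * K1 \<le> \<alpha>"
    using zero_le_power2[of "K1 - 1"] by (simp add: \<alpha>_def power2_diff)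
  then have "E\<^sup>2 \<le> exp (\<alpha> * (1 - t))"
    using mult_right_mono[of "2 * K1" \<alpha> "1 - t"] assms
    by (simp add: E_def mult.assoc flip: exp_add exp_of_nat_mult)
  moreover have "E * (t - a) \<le> (\<mu> * E\<^sup>2 + (t - a)\<^sup>2 / \<mu>) / 2"
    using \<open>\<mu> > 0\<close> zero_le_power2[of "\<mu> * E - (t - a)"]
    by (simp add: field_simps power2_eq_square)
  ultimately have lag_le: "E * (t - a) \<le> (\<mu> * exp (\<alpha> * (1 - t)) + (t - a)\<^sup>2 / \<mu>) / 2"
    using \<open>\<mu> > 0\<close> by (smt (verit) divide_right_mono mult_left_mono)
  have "exp (- K1 * t) = exp (- K1) * E"
    by (simp add: E_def algebra_simps flip: exp_add)
  then have "exp (- K1 * t) * (\<kappa> * (t - a)) = exp (- K1) * \<kappa> * (E * (t - a))"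
    by (simp only: mult_ac)
  also have "\<dots> \<le> exp (- K1) * \<kappa> * ((\<mu> * exp (\<alpha> * (1 - t)) + (t - a)\<^sup>2 / \<mu>) / 2)"
    by (rule mult_left_mono[OF lag_le]) (simp add: \<kappa>_nonneg)
  finally show ?thesis by simp
qed

definition step_potential :: "real \<Rightarrow> real \<Rightarrow> real \<Rightarrow> real" where
  "step_potential \<mu> a t =
     exp (- K1) * \<kappa> / 2 * (- \<mu> * exp (\<alpha> * (1 - t)) / \<alpha> + (t - a) ^ 3 / (3 * \<mu>))"

lemma step_potential_deriv:
  assumes "\<mu> > 0"
  shows "(step_potential \<mu> a has_real_derivative
      exp (- K1) * \<kappa> / 2 * (\<mu> * exp (\<alpha> * (1 - t)) + (t - a)\<^sup>2 / \<mu>)) (at t within S)"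
  unfolding step_potential_def using assms \<alpha>_pos
  by (auto intro!: derivative_eq_intros simp: field_simps power2_eq_square)

lemma interpolation_defect_growth:
  assumes "0 \<le> a" "a \<le> s" "s \<le> 1"
  shows "norm (phi\<theta> a y - phi s (X s x))
    \<le> K1 * norm (y + (s - a) *\<^sub>R phi\<theta> a y - X s x) + \<kappa> * (s - a) + drift_error x s"
proof -
  define Y where "Y = y + (s - a) *\<^sub>R phi\<theta> a y"
  have "s \<in> {0..1}" and "a \<in> {0..1}" using assms by auto
  have "phi\<theta> a y - phi s (X s x) = (phi\<theta> a y - phi\<theta> s y) + (phi\<theta> s y - phi\<theta> s Y)
      + (phi\<theta> s Y - phi\<theta> s (X s x)) + (phi\<theta> s (X s x) - phi s (X s x))"
    by simp
  then have "norm (phi\<theta> a y - phi s (X s x)) \<le> norm (phi\<theta> a y - phi\<theta> s y) + norm (phi\<theta> s y - phi\<theta> s Y)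
      + norm (phi\<theta> s Y - phi\<theta> s (X s x)) + drift_error x s"
    unfolding drift_error_def by (metis norm_triangle_le norm_triangle_ineq add_right_mono)
  also have "norm (phi\<theta> a y - phi\<theta> s y) \<le> K2 * (s - a)"
    using lip_time[OF \<open>a \<in> {0..1}\<close> \<open>s \<in> {0..1}\<close>] \<open>a \<le> s\<close> by simp
  also have "norm (phi\<theta> s y - phi\<theta> s Y) \<le> K1 * ((s - a) * K3)"
  proof -
    have "norm (y - Y) \<le> (s - a) * K3"
      using bounded[OF \<open>a \<in> {0..1}\<close>] \<open>a \<le> s\<close> by (simp add: Y_def mult_left_mono)
    then show ?thesis
      using lip_phi\<theta>[OF \<open>s \<in> {0..1}\<close>, of y Y] mult_left_mono[OF _ K1_nonneg] by fastforce
  qed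
  also have "norm (phi\<theta> s Y - phi\<theta> s (X s x)) \<le> K1 * norm (Y - X s x)"
    using lip_phi\<theta>[OF \<open>s \<in> {0..1}\<close>] .
  finally show ?thesis
    by (simp add: Y_def \<kappa>_def algebra_simps)
qed

lemma euler_step_error:
  assumes "\<mu> > 0" "0 \<le> a" "h \<ge> 0" "a + h \<le> 1"
    and drift_integrable: "drift_error x integrable_on {a..a + h}"
  shows "exp (- K1 * (a + h)) * norm (y + h *\<^sub>R phi\<theta> a y - X (a + h) x)
    \<le> exp (- K1 * a) * norm (y - X a x) + integral {a..a + h} (drift_error x)
       + (step_potential \<mu> a (a + h) - step_potential \<mu> a a)"
proof -
  define b where "b = a + h"
  define e where "e s = y + (s - a) *\<^sub>R phi\<theta> a y - X s x" for s
  define e' where "e' s = phi\<theta> a y - phi s (X s x)" for s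
  have "a \<le> b" and ab_01: "{a..b} \<subseteq> {0..1}"
    using assms by (auto simp: b_def)
  have e_deriv: "(e has_vector_derivative e' s) (at s within {a..b})" if "s \<in> {a..b}" for s
  proof -
    have "((\<lambda>s. X s x) has_vector_derivative phi s (X s x)) (at s within {a..b})"
      using flow_ode[of s x] that ab_01 by (auto intro: has_vector_derivative_within_subset)
    then show ?thesis
      unfolding e_def e'_def
      by (auto intro!: derivative_eq_intros simp: has_vector_derivative_def algebra_simps)
  qed
  have w_integral: "((\<lambda>s. drift_error x s + exp (- K1) * \<kappa> / 2 * (\<mu> * exp (\<alpha> * (1 - s)) + (s - a)\<^sup>2 / \<mu>))
      has_integral (integral {a..b} (drift_error x) + (step_potential \<mu> a b - step_potential \<mu> a a))) {a..b}"
    using drift_integrable step_potential_deriv[OF \<open>\<mu> > 0\<close>] \<open>a \<le> b\<close>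
    by (intro has_integral_add integrable_integral fundamental_theorem_of_calculus)
      (auto simp: b_def has_real_derivative_iff_has_vector_derivative)
  have "exp (- K1 * s) * (norm (e' s) - K1 * norm (e s))
      \<le> drift_error x s + exp (- K1) * \<kappa> / 2 * (\<mu> * exp (\<alpha> * (1 - s)) + (s - a)\<^sup>2 / \<mu>)"
    if "s \<in> {a..b}" for s
  proof -
    have "a \<le> s" "s \<le> 1" using that ab_01 by auto
    then have "exp (- K1 * s) * (norm (e' s) - K1 * norm (e s))
        \<le> exp (- K1 * s) * (\<kappa> * (s - a)) + exp (- K1 * s) * drift_error x s"
      using interpolation_defect_growth[OF \<open>0 \<le> a\<close>, of s y x]
      by (simp add: e_def e'_def distrib_left[symmetric])
    also have "exp (- K1 * s) * drift_error x s \<le> drift_error x s"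
      using K1_nonneg \<open>a \<le> s\<close> \<open>0 \<le> a\<close> by (intro mult_left_le_one_le) (auto simp: drift_error_def)
    also have "exp (- K1 * s) * (\<kappa> * (s - a))
        \<le> exp (- K1) * \<kappa> / 2 * (\<mu> * exp (\<alpha> * (1 - s)) + (s - a)\<^sup>2 / \<mu>)"
      using exp_weighted_lag_le[OF \<open>\<mu> > 0\<close> \<open>a \<le> s\<close> \<open>s \<le> 1\<close>] .
    finally show ?thesis by simp
  qed
  from exp_weighted_norm_le_integral[OF \<open>a \<le> b\<close> K1_nonneg e_deriv w_integral this]
  show ?thesis
    by (simp add: e_def b_def)
qed

lemma euler_error_accumulated:
  assumes "\<mu> > 0" "h > 0" "real m * h \<le> 1"
    and drift_integrable: "drift_error x integrable_on {0..1}"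
  shows "exp (- K1 * (real m * h)) * norm (euler phi\<theta> h m x - X (real m * h) x)
    \<le> integral {0..real m * h} (drift_error x) + exp (- K1) * \<kappa> / 2 *
        (\<mu> * (exp \<alpha> - exp (\<alpha> * (1 - real m * h))) / \<alpha> + real m * h ^ 3 / (3 * \<mu>))"
  using \<open>real m * h \<le> 1\<close>
proof (induction m)
  case 0
  then show ?case by (simp add: flow_init)
next
  case (Suc m)
  define P where "P j = exp (- K1) * \<kappa> / 2 *
    (\<mu> * (exp \<alpha> - exp (\<alpha> * (1 - real j * h))) / \<alpha> + real j * h ^ 3 / (3 * \<mu>))" for j
  define a where "a = real m * h"
  have "0 \<le> a" "a + h \<le> 1" and Suc_eq: "real (Suc m) * h = a + h"
    using Suc.prems \<open>h > 0\<close> by (auto simp: a_def algebra_simps)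
  have IH: "exp (- K1 * a) * norm (euler phi\<theta> h m x - X a x) \<le> integral {0..a} (drift_error x) + P m"
    using Suc.IH \<open>0 \<le> a\<close> \<open>a + h \<le> 1\<close> \<open>h > 0\<close> by (simp add: a_def P_def)
  have "drift_error x integrable_on {a..a + h}"
    by (rule integrable_on_subinterval[OF drift_integrable]) (use \<open>0 \<le> a\<close> \<open>a + h \<le> 1\<close> in auto)
  from euler_step_error[OF \<open>\<mu> > 0\<close> \<open>0 \<le> a\<close> less_imp_le[OF \<open>h > 0\<close>] \<open>a + h \<le> 1\<close> this]
  have step: "exp (- K1 * (a + h)) * norm (euler phi\<theta> h (Suc m) x - X (a + h) x)
      \<le> exp (- K1 * a) * norm (euler phi\<theta> h m x - X a x) + integral {a..a + h} (drift_error x)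
        + (step_potential \<mu> a (a + h) - step_potential \<mu> a a)"
    by (simp add: a_def)
  have "drift_error x integrable_on {0..a + h}"
    by (rule integrable_on_subinterval[OF drift_integrable]) (use \<open>a + h \<le> 1\<close> in auto)
  then have integral_split: "integral {0..a} (drift_error x) + integral {a..a + h} (drift_error x)
      = integral {0..a + h} (drift_error x)"
    using \<open>0 \<le> a\<close> \<open>h > 0\<close> by (intro Henstock_Kurzweil_Integration.integral_combine) auto
  have "P (Suc m) = P m + (step_potential \<mu> a (a + h) - step_potential \<mu> a a)"
    using \<open>\<mu> > 0\<close> \<alpha>_pos by (simp add: P_def a_def step_potential_def field_simps)
  then have "exp (- K1 * (a + h)) * norm (euler phi\<theta> h (Suc m) x - X (a + h) x)
      \<le> integral {0..a + h} (drift_error x) + P (Suc m)"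
    using IH step integral_split by linarith
  then show ?case by (simp only: Suc_eq P_def)
qed

lemma euler_error_le:
  assumes "n \<ge> 1" and "drift_error x integrable_on {0..1}"
  shows "norm (euler phi\<theta> (1 / real n) n x - X 1 x)
    \<le> \<kappa> * sqrt (\<Gamma> / 3) / real n + exp K1 * integral {0..1} (drift_error x)"
proof -
  define h where "h = 1 / real n"
  define r where "r = sqrt (3 * \<Gamma>)"
  \<comment> \<open>\<open>\<mu> = h / r\<close> balances the two terms of the step potential\<close>
  define N where "N = norm (euler phi\<theta> h n x - X 1 x)"
  define I where "I = integral {0..1} (drift_error x)"
  have "h > 0" "real n * h = 1" using \<open>n \<ge> 1\<close> by (auto simp: h_def)
  have "r > 0" "r\<^sup>2 = 3 * \<Gamma>" using \<Gamma>_pos by (auto simp: r_def)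
  have "h / r > 0" using \<open>h > 0\<close> \<open>r > 0\<close> by simp
  from euler_error_accumulated[OF this \<open>h > 0\<close>, of n] \<open>real n * h = 1\<close> assms(2)
  have "exp (- K1) * N \<le> I + exp (- K1) * \<kappa> / 2 * (h / r * \<Gamma> + real n * h ^ 3 / (3 * (h / r)))"
    by (simp add: N_def I_def \<Gamma>_def)
  also have "h / r * \<Gamma> + real n * h ^ 3 / (3 * (h / r)) = 2 * (h * r / 3)"
  proof -
    have "\<Gamma> = r\<^sup>2 / 3" using \<open>r\<^sup>2 = 3 * \<Gamma>\<close> by simp
    then show ?thesis
      using \<open>real n * h = 1\<close> \<open>h > 0\<close> \<open>r > 0\<close>
      by (simp add: field_simps power2_eq_square power3_eq_cube)
  qed
  finally have "exp (- K1) * N \<le> I + exp (- K1) * (\<kappa> * (h * r / 3))"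
    by simp
  then have "exp K1 * (exp (- K1) * N) \<le> exp K1 * (I + exp (- K1) * (\<kappa> * (h * r / 3)))"
    by (rule mult_left_mono) simp
  moreover have sqrt_eq: "sqrt (\<Gamma> / 3) = r / 3"
    using \<open>r > 0\<close> \<open>r\<^sup>2 = 3 * \<Gamma>\<close> by (intro real_sqrt_unique) (auto simp: power_divide)
  ultimately show ?thesis
    unfolding sqrt_eq by (simp add: N_def I_def h_def distrib_left mult.assoc[symmetric] mult_exp_exp)
qed

lemma discretization_error_le:
  assumes "n \<ge> 1"
  shows "\<kappa> * sqrt (\<Gamma> / 3) / real n
    \<le> sqrt (1 / real n) * sqrt ((1/2 * K2\<^sup>2 + 17/2 * K1\<^sup>2 * K3\<^sup>2 + 5 * K1 * K2 * K3)
                                * (exp (1 + K1\<^sup>2) - 1) / (1 + K1\<^sup>2))"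
proof -
  define C where "C = 1/2 * K2\<^sup>2 + 17/2 * K1\<^sup>2 * K3\<^sup>2 + 5 * K1 * K2 * K3"
  have K: "K1 \<ge> 0" "K2 \<ge> 0" "K3 \<ge> 0" using K1_nonneg K2_nonneg K3_nonneg .
  have "3 * C - \<kappa>\<^sup>2 = 1/2 * K2\<^sup>2 + 49/2 * (K1 * K3)\<^sup>2 + 13 * K1 * K2 * K3"
    by (simp add: C_def \<kappa>_def power2_eq_square algebra_simps)
  also have "\<dots> \<ge> 0" using K by (intro add_nonneg_nonneg mult_nonneg_nonneg) auto
  finally have "\<kappa>\<^sup>2 \<le> 3 * C" by simp
  then have "C \<ge> 0" using zero_le_power2[of \<kappa>] by linarith
  have "(\<kappa> * sqrt (\<Gamma> / 3) / real n)\<^sup>2 = \<kappa>\<^sup>2 / 3 * \<Gamma> / (real n)\<^sup>2"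
    using \<Gamma>_pos by (simp add: power_mult_distrib power_divide)
  also have "\<dots> \<le> C * \<Gamma> / (real n)\<^sup>2"
    using \<open>\<kappa>\<^sup>2 \<le> 3 * C\<close> \<Gamma>_pos by (intro divide_right_mono mult_right_mono) auto
  also have "\<dots> \<le> C * \<Gamma> / real n"
    using \<open>n \<ge> 1\<close> \<Gamma>_pos \<open>C \<ge> 0\<close>
    by (intro divide_left_mono mult_nonneg_nonneg) (auto simp: power2_eq_square)
  also have "\<dots> = (sqrt (1 / real n) * sqrt (C * \<Gamma>))\<^sup>2"
    using \<Gamma>_pos \<open>C \<ge> 0\<close> by (simp add: power_mult_distrib)
  finally have "\<kappa> * sqrt (\<Gamma> / 3) / real n \<le> sqrt (1 / real n) * sqrt (C * \<Gamma>)"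
    by (rule power2_le_imp_le) (use \<Gamma>_pos \<open>C \<ge> 0\<close> in simp)
  then show ?thesis
    by (simp add: C_def \<Gamma>_def \<alpha>_def)
qed

lemma flow_lipschitz:
  assumes "t \<in> {0..1}"
  shows "norm (X t x - X t z) \<le> exp (K1 * t) * norm (x - z)"
proof -
  have "0 \<le> t" and sub: "{0..t} \<subseteq> {0..1}" using assms by auto
  have "((\<lambda>s. X s x - X s z) has_vector_derivative phi s (X s x) - phi s (X s z)) (at s within {0..t})"
    if "s \<in> {0..t}" for s
    using has_vector_derivative_diff[OF flow_ode[of s x] flow_ode[of s z]] that sub
    by (auto intro: has_vector_derivative_within_subset)
  moreover have "exp (- K1 * s) * (norm (phi s (X s x) - phi s (X s z)) - K1 * norm (X s x - X s z)) \<le> 0"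
    if "s \<in> {0..t}" for s
    using lip_phi[of s "X s x" "X s z"] that sub by (auto simp: mult_nonneg_nonpos)
  ultimately have "exp (- K1 * t) * norm (X t x - X t z) \<le> exp (- K1 * 0) * norm (X 0 x - X 0 z) + 0"
    by (intro exp_weighted_norm_le_integral[OF \<open>0 \<le> t\<close> K1_nonneg _ has_integral_0])
  then have "exp (K1 * t) * (exp (- K1 * t) * norm (X t x - X t z)) \<le> exp (K1 * t) * norm (x - z)"
    by (simp add: flow_init)
  then show ?thesis
    by (simp add: mult.assoc[symmetric] mult_exp_exp)
qed

lemma flow_continuous: "t \<in> {0..1} \<Longrightarrow> continuous_on UNIV (X t)"
  by (rule lipschitz_on_continuous_on[where L = "exp (K1 * t)"], rule lipschitz_onI)
    (auto simp: dist_norm flow_lipschitz)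

lemma phi\<theta>_continuous: "t \<in> {0..1} \<Longrightarrow> continuous_on UNIV (phi\<theta> t)"
  by (rule lipschitz_on_continuous_on[where L = K1], rule lipschitz_onI)
    (use lip_phi\<theta> K1_nonneg in \<open>auto simp: dist_norm\<close>)

text \<open>The hypotheses control \<open>X\<close> and \<open>phi\<theta>\<close> only at times in \<open>[0, 1]\<close>; composing with
  \<open>clamp 0 1\<close> in time gives jointly continuous functions on all of \<open>\<real> \<times> 'a\<close>.\<close>
lemma flow_clamp_continuous: "continuous_on UNIV (\<lambda>p. X (clamp 0 1 (fst p)) (snd p))"
proof (rule continuous_on_uncurry_of_lipschitz)
  have "continuous_on {0..1} (\<lambda>t. X t x)" for x
    unfolding continuous_on_eq_continuous_within
    using flow_ode[of _ x] by (blast intro: has_vector_derivative_continuous)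
  then show "continuous_on UNIV (\<lambda>t. X (clamp 0 1 t) x)" for x
    by (intro clamp_continuous_on) simp
  show "dist (X (clamp 0 1 t) x) (X (clamp 0 1 t) y) \<le> exp K1 * dist x y" for t x y
    using flow_lipschitz[OF clamp_unit_interval[of t]] clamp_unit_interval[of t] K1_nonneg
    by (smt (verit) atLeastAtMost_iff dist_norm exp_mono mult_left_le mult_right_mono norm_ge_zero)
qed

lemma phi\<theta>_clamp_continuous: "continuous_on UNIV (\<lambda>p. phi\<theta> (clamp 0 1 (fst p)) (snd p))"
proof (rule continuous_on_uncurry_of_lipschitz)
  show "continuous_on UNIV (\<lambda>t. phi\<theta> (clamp 0 1 t) x)" for x
    by (intro clamp_continuous_on lipschitz_on_continuous_on[where L = K2] lipschitz_onI)
      (use lip_time K2_nonneg in \<open>auto simp: dist_norm dist_real_def abs_minus_commute\<close>)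
  show "dist (phi\<theta> (clamp 0 1 t) x) (phi\<theta> (clamp 0 1 t) y) \<le> K1 * dist x y" for t x y
    using lip_phi\<theta>[OF clamp_unit_interval] by (simp add: dist_norm)
qed

lemma euler_continuous:
  assumes "h \<ge> 0" "real k * h \<le> 1"
  shows "continuous_on UNIV (euler phi\<theta> h k)"
  using assms(2)
proof (induction k)
  case (Suc k)
  then have "real k * h \<in> {0..1}" "continuous_on UNIV (euler phi\<theta> h k)"
    using \<open>h \<ge> 0\<close> by (auto simp: algebra_simps)
  then show ?case
    by (auto intro!: continuous_intros continuous_on_compose2[OF phi\<theta>_continuous])
qed (simp add: continuous_on_id)

definition clamped_drift_error :: "real \<times> 'a \<Rightarrow> real" where
  "clamped_drift_error p = norm (phi\<theta> (clamp 0 1 (fst p)) (X (clamp 0 1 (fst p)) (snd p))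
                                 - phi (fst p) (X (clamp 0 1 (fst p)) (snd p)))"

lemma drift_error_nonneg: "drift_error x s \<ge> 0"
  by (simp add: drift_error_def)

lemma clamped_drift_error_eq: "s \<in> {0..1} \<Longrightarrow> clamped_drift_error (s, x) = drift_error x s"
  by (simp add: clamped_drift_error_def drift_error_def)

lemma clamped_drift_error_measurable:
  assumes phi_meas: "(\<lambda>(t, x). phi t x) \<in> borel_measurable borel"
  shows "clamped_drift_error \<in> borel_measurable borel"
proof -
  have flow_meas: "(\<lambda>p. (fst p, X (clamp 0 1 (fst p)) (snd p))) \<in> borel_measurable borel"
    by (intro borel_measurable_continuous_onI continuous_on_Pair flow_clamp_continuous continuous_intros)
  have "(\<lambda>p. phi\<theta> (clamp 0 1 (fst p)) (snd p)) \<in> borel_measurable borel"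
    by (rule borel_measurable_continuous_onI[OF phi\<theta>_clamp_continuous])
  from measurable_compose[OF flow_meas this] measurable_compose[OF flow_meas phi_meas]
  show ?thesis
    unfolding clamped_drift_error_def by simp
qed

lemma drift_error_set_measurable:
  assumes phi_meas: "(\<lambda>(t, x). phi t x) \<in> borel_measurable borel"
  shows "set_borel_measurable lborel {0..1} (drift_error x)"
proof -
  have [measurable]: "(\<lambda>s. clamped_drift_error (s, x)) \<in> borel_measurable borel"
    by (rule measurable_compose[OF _ clamped_drift_error_measurable[OF phi_meas]])
      (intro borel_measurable_continuous_onI continuous_intros)
  have "(\<lambda>s. indicator {0..1} s *\<^sub>R drift_error x s) = (\<lambda>s. indicator {0..1} s *\<^sub>R clamped_drift_error (s, x))"
    by (auto simp: indicator_def clamped_drift_error_eq)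
  then show ?thesis
    unfolding set_borel_measurable_def by simp
qed

lemma euler_error_sq_le:
  assumes phi_meas: "(\<lambda>(t, x). phi t x) \<in> borel_measurable borel"
    and "n \<ge> 1" "t > 0"
  shows "ennreal ((norm (euler phi\<theta> (1 / real n) n x - X 1 x))\<^sup>2)
    \<le> ennreal ((1 + t) * (\<kappa> * sqrt (\<Gamma> / 3) / real n)\<^sup>2) + ennreal ((1 + 1 / t) * exp (2 * K1))
       * (\<integral>\<^sup>+ s \<in> {0..1}. ennreal ((drift_error x s)\<^sup>2) \<partial>lborel)"
proof (cases "(\<integral>\<^sup>+ s \<in> {0..1}. ennreal ((drift_error x s)\<^sup>2) \<partial>lborel) = \<infinity>")
  case True
  have "1 + 1 / t > 0" using \<open>t > 0\<close> by (simp add: add_pos_pos)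
  then show ?thesis using True by (simp add: ennreal_mult_top)
next
  case False
  define D where "D = \<kappa> * sqrt (\<Gamma> / 3) / real n"
  define I where "I = integral {0..1} (drift_error x)"
  have finite: "(\<integral>\<^sup>+ s \<in> {0..1}. ennreal ((drift_error x s)\<^sup>2) \<partial>lborel) < \<infinity>"
    using False by (simp add: less_top)
  note square_integrable =
    unit_interval_integral_sq_le[OF drift_error_set_measurable[OF phi_meas] drift_error_nonneg finite]
  have "I \<ge> 0" unfolding I_def
    by (rule integral_nonneg[OF square_integrable(1) drift_error_nonneg])
  have "D \<ge> 0" unfolding D_def using \<kappa>_nonneg \<Gamma>_pos by simp
  have "norm (euler phi\<theta> (1 / real n) n x - X 1 x) \<le> D + exp K1 * I"
    unfolding D_def I_def by (rule euler_error_le[OF \<open>n \<ge> 1\<close> square_integrable(1)])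
  then have "(norm (euler phi\<theta> (1 / real n) n x - X 1 x))\<^sup>2 \<le> (D + exp K1 * I)\<^sup>2"
    by (intro power_mono) auto
  also have "\<dots> \<le> (1 + t) * D\<^sup>2 + (1 + 1 / t) * exp (2 * K1) * I\<^sup>2"
    using sq_sum_le_weighted[OF \<open>t > 0\<close>, of D "exp K1 * I"]
    by (simp add: power_mult_distrib mult.assoc flip: exp_of_nat_mult)
  finally have "ennreal ((norm (euler phi\<theta> (1 / real n) n x - X 1 x))\<^sup>2)
      \<le> ennreal ((1 + t) * D\<^sup>2 + (1 + 1 / t) * exp (2 * K1) * I\<^sup>2)"
    by (rule ennreal_leI)
  also have "\<dots> = ennreal ((1 + t) * D\<^sup>2) + ennreal ((1 + 1 / t) * exp (2 * K1)) * ennreal (I\<^sup>2)"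
    using \<open>t > 0\<close> by (simp add: ennreal_plus ennreal_mult)
  also have "\<dots> \<le> ennreal ((1 + t) * D\<^sup>2) + ennreal ((1 + 1 / t) * exp (2 * K1))
      * (\<integral>\<^sup>+ s \<in> {0..1}. ennreal ((drift_error x s)\<^sup>2) \<partial>lborel)"
    using square_integrable(2) unfolding I_def by (intro add_left_mono mult_left_mono) auto
  finally show ?thesis
    unfolding D_def .
qed

lemma mean_drift_error_sq:
  assumes "sigma_finite_measure M" and sets_M: "sets M = sets borel"
    and phi_meas: "(\<lambda>(t, x). phi t x) \<in> borel_measurable borel"
  shows "(\<lambda>x. \<integral>\<^sup>+ s \<in> {0..1}. ennreal ((drift_error x s)\<^sup>2) \<partial>lborel) \<in> borel_measurable M"
    and "(\<integral>\<^sup>+ x. (\<integral>\<^sup>+ s \<in> {0..1}. ennreal ((drift_error x s)\<^sup>2) \<partial>lborel) \<partial>M)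
      = (\<integral>\<^sup>+ t \<in> {0..1}. (\<integral>\<^sup>+ x. ennreal ((norm (phi\<theta> t x - phi t x))\<^sup>2) \<partial>distr M borel (X t)) \<partial>lborel)"
proof -
  interpret pair_sigma_finite lborel M
    by (simp add: pair_sigma_finite_def lborel.sigma_finite_measure_axioms assms(1))
  define g where "g p = ennreal ((clamped_drift_error p)\<^sup>2) * indicator {0..1} (fst p)" for p :: "real \<times> 'a"
  have [measurable]: "fst \<in> (borel :: (real \<times> 'a) measure) \<rightarrow>\<^sub>M borel"
    "clamped_drift_error \<in> borel_measurable borel"
    by (intro borel_measurable_continuous_onI continuous_intros clamped_drift_error_measurable phi_meas)+
  have g_meas: "g \<in> borel_measurable borel"
    unfolding g_def by measurable
  have g_eq: "(\<integral>\<^sup>+ s \<in> {0..1}. ennreal ((drift_error x s)\<^sup>2) \<partial>lborel) = (\<integral>\<^sup>+ s. g (s, x) \<partial>lborel)" for x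
    unfolding g_def by (intro nn_integral_cong) (auto simp: indicator_def clamped_drift_error_eq)
  have "(\<lambda>p. (snd p, fst p)) \<in> (borel :: ('a \<times> real) measure) \<rightarrow>\<^sub>M borel"
    by (intro borel_measurable_continuous_onI continuous_intros)
  from measurable_compose[OF this g_meas]
  have "(\<lambda>(x, s). g (s, x)) \<in> borel_measurable (M \<Otimes>\<^sub>M lborel)"
    by (intro measurable_pair_of_borel) (simp_all add: case_prod_beta' sets_M)
  then show "(\<lambda>x. \<integral>\<^sup>+ s \<in> {0..1}. ennreal ((drift_error x s)\<^sup>2) \<partial>lborel) \<in> borel_measurable M"
    unfolding g_eq by (rule lborel.borel_measurable_nn_integral)
  have "(\<integral>\<^sup>+ x. (\<integral>\<^sup>+ s. g (s, x) \<partial>lborel) \<partial>M) = (\<integral>\<^sup>+ s. (\<integral>\<^sup>+ x. g (s, x) \<partial>M) \<partial>lborel)"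
    by (rule Fubini') (use measurable_pair_of_borel[OF g_meas] sets_M in simp)
  also have "\<dots> = (\<integral>\<^sup>+ t \<in> {0..1}. (\<integral>\<^sup>+ x. ennreal ((norm (phi\<theta> t x - phi t x))\<^sup>2) \<partial>distr M borel (X t)) \<partial>lborel)"
  proof (rule nn_integral_cong)
    fix s :: real
    show "(\<integral>\<^sup>+ x. g (s, x) \<partial>M) = (\<integral>\<^sup>+ x. ennreal ((norm (phi\<theta> s x - phi s x))\<^sup>2)
        \<partial>distr M borel (X s)) * indicator {0..1} s"
    proof (cases "s \<in> {0..1}")
      case True
      have [measurable]: "X s \<in> borel_measurable borel" "phi\<theta> s \<in> borel_measurable borel"
        using borel_measurable_continuous_onI[OF flow_continuous[OF True]]
          borel_measurable_continuous_onI[OF phi\<theta>_continuous[OF True]] by auto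
      have "(\<lambda>y. (s, y)) \<in> (borel :: 'a measure) \<rightarrow>\<^sub>M borel"
        by (intro borel_measurable_continuous_onI continuous_intros)
      from measurable_compose[OF this phi_meas] have "phi s \<in> borel_measurable borel"
        by simp
      then show ?thesis
        using True by (simp add: nn_integral_distr sets_M g_def clamped_drift_error_eq drift_error_def
            cong: measurable_cong_sets)
    qed (simp add: g_def)
  qed
  finally show "(\<integral>\<^sup>+ x. (\<integral>\<^sup>+ s \<in> {0..1}. ennreal ((drift_error x s)\<^sup>2) \<partial>lborel) \<partial>M)
      = (\<integral>\<^sup>+ t \<in> {0..1}. (\<integral>\<^sup>+ x. ennreal ((norm (phi\<theta> t x - phi t x))\<^sup>2) \<partial>distr M borel (X t)) \<partial>lborel)"
    unfolding g_eq .
qed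

lemma expected_euler_error_sq_le:
  assumes "prob_space M" and sets_M: "sets M = sets borel"
    and phi_meas: "(\<lambda>(t, x). phi t x) \<in> borel_measurable borel"
    and delta: "(\<integral>\<^sup>+ t \<in> {0..1}. (\<integral>\<^sup>+ x. ennreal ((norm (phi\<theta> t x - phi t x))\<^sup>2)
                  \<partial>(distr M borel (X t))) \<partial>lborel) = ennreal (\<delta>\<^sup>2)"
    and "\<delta> \<ge> 0" "n \<ge> 1"
  shows "(\<integral>\<^sup>+ x. ennreal ((norm (euler phi\<theta> (1 / real n) n x - X 1 x))\<^sup>2) \<partial>M)
    \<le> ennreal ((\<kappa> * sqrt (\<Gamma> / 3) / real n + exp K1 * \<delta>)\<^sup>2)"
proof (rule le_sq_sum_of_weighted_bounds)
  interpret M: prob_space M by fact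
  define S where "S x = (\<integral>\<^sup>+ s \<in> {0..1}. ennreal ((drift_error x s)\<^sup>2) \<partial>lborel)" for x
  note mean = mean_drift_error_sq[OF M.sigma_finite_measure_axioms sets_M phi_meas, folded S_def]
  fix t :: real
  assume "t > 0"
  have "(\<integral>\<^sup>+ x. ennreal ((norm (euler phi\<theta> (1 / real n) n x - X 1 x))\<^sup>2) \<partial>M)
      \<le> (\<integral>\<^sup>+ x. ennreal ((1 + t) * (\<kappa> * sqrt (\<Gamma> / 3) / real n)\<^sup>2)
            + ennreal ((1 + 1 / t) * exp (2 * K1)) * S x \<partial>M)"
    unfolding S_def by (intro nn_integral_mono euler_error_sq_le[OF phi_meas \<open>n \<ge> 1\<close> \<open>t > 0\<close>])
  also have "\<dots> = ennreal ((1 + t) * (\<kappa> * sqrt (\<Gamma> / 3) / real n)\<^sup>2)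
      + ennreal ((1 + 1 / t) * exp (2 * K1)) * ennreal (\<delta>\<^sup>2)"
    using mean by (simp add: nn_integral_add nn_integral_cmult M.emeasure_space_1 delta)
  also have "\<dots> = ennreal ((1 + t) * (\<kappa> * sqrt (\<Gamma> / 3) / real n)\<^sup>2 + (1 + 1 / t) * (exp K1 * \<delta>)\<^sup>2)"
    using \<open>t > 0\<close> by (simp add: ennreal_plus ennreal_mult power_mult_distrib mult.assoc flip: exp_of_nat_mult)
  finally show "(\<integral>\<^sup>+ x. ennreal ((norm (euler phi\<theta> (1 / real n) n x - X 1 x))\<^sup>2) \<partial>M)
      \<le> ennreal ((1 + t) * (\<kappa> * sqrt (\<Gamma> / 3) / real n)\<^sup>2 + (1 + 1 / t) * (exp K1 * \<delta>)\<^sup>2)" .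
qed (use \<kappa>_nonneg \<Gamma>_pos \<open>\<delta> \<ge> 0\<close> in auto)

end

theorem theorem4p2:
  fixes p0 :: "'a::euclidean_space \<Rightarrow> real"
    and phi phi\<theta> :: "real \<Rightarrow> 'a \<Rightarrow> 'a"
    and X :: "real \<Rightarrow> 'a \<Rightarrow> 'a"
    and \<delta> K1 K2 K3 :: real
    and n :: nat
  assumes p0_meas: "p0 \<in> borel_measurable borel"
    and p0_nonneg: "\<And>x. p0 x \<ge> 0"
    and p0_total: "(\<integral>\<^sup>+ x. ennreal (p0 x) \<partial>lborel) = 1"
    and phi_meas: "(\<lambda>(t, x). phi t x) \<in> borel_measurable borel"
    and flow_init: "\<And>x. X 0 x = x"
    and flow_ode: "\<And>x t. t \<in> {0..1} \<Longrightarrow>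
        ((\<lambda>s. X s x) has_vector_derivative phi t (X t x)) (at t within {0..1})"
    and delta_nonneg: "\<delta> \<ge> 0"
    and delta_def: "(\<integral>\<^sup>+ t \<in> {0..1}.
          (\<integral>\<^sup>+ x. ennreal ((norm (phi\<theta> t x - phi t x))\<^sup>2)
             \<partial>(distr (density lborel p0) borel (X t))) \<partial>lborel) = ennreal (\<delta>\<^sup>2)"
    and n_pos: "n \<ge> 1"
    and lip_phi: "\<And>t x1 x2. t \<in> {0..1} \<Longrightarrow> norm (phi t x1 - phi t x2) \<le> K1 * norm (x1 - x2)"
    and lip_phi\<theta>: "\<And>t x1 x2. t \<in> {0..1} \<Longrightarrow> norm (phi\<theta> t x1 - phi\<theta> t x2) \<le> K1 * norm (x1 - x2)"
    and lip_time: "\<And>x t1 t2. t1 \<in> {0..1} \<Longrightarrow> t2 \<in> {0..1} \<Longrightarrow>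
        norm (phi\<theta> t1 x - phi\<theta> t2 x) \<le> K2 * \<bar>t2 - t1\<bar>"
    and bounded: "\<And>x t. t \<in> {0..1} \<Longrightarrow> norm (phi\<theta> t x) \<le> K3"
  shows "W2 (distr (density lborel p0) borel (euler phi\<theta> (1 / real n) n))
            (distr (density lborel p0) borel (X 1))
         \<le> ennreal (\<delta> * sqrt (exp (1 + 2 * K1))
              + sqrt (1 / real n) * sqrt ((1/2 * K2\<^sup>2 + 17/2 * K1\<^sup>2 * K3\<^sup>2 + 5 * K1 * K2 * K3)
                                        * (exp (1 + K1\<^sup>2) - 1) / (1 + K1\<^sup>2)))"
proof -
  interpret euler_flow phi phi\<theta> X K1 K2 K3
    using flow_init flow_ode lip_phi lip_phi\<theta> lip_time bounded by unfold_locales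
  let ?M = "density lborel p0"
  let ?D = "\<kappa> * sqrt (\<Gamma> / 3) / real n"
  have M: "prob_space ?M" by (rule prob_space_density_lborel[OF p0_meas p0_total])
  moreover have "euler phi\<theta> (1 / real n) n \<in> borel_measurable ?M"
    using n_pos by (simp add: borel_measurable_continuous_onI euler_continuous)
  moreover have "X 1 \<in> borel_measurable ?M"
    by (simp add: borel_measurable_continuous_onI flow_continuous)
  ultimately have "W2_sq (distr ?M borel (euler phi\<theta> (1 / real n) n)) (distr ?M borel (X 1))
      \<le> (\<integral>\<^sup>+ x. ennreal ((norm (euler phi\<theta> (1 / real n) n x - X 1 x))\<^sup>2) \<partial>?M)"
    by (rule W2_sq_distr_le)
  also have "\<dots> \<le> ennreal ((?D + exp K1 * \<delta>)\<^sup>2)"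
    by (rule expected_euler_error_sq_le[OF M _ phi_meas delta_def delta_nonneg n_pos]) simp
  finally have "W2 (distr ?M borel (euler phi\<theta> (1 / real n) n)) (distr ?M borel (X 1))
      \<le> ennreal (?D + exp K1 * \<delta>)"
    by (rule W2_le_of_W2_sq_le) (use \<kappa>_nonneg \<Gamma>_pos delta_nonneg in simp)
  moreover have "?D + exp K1 * \<delta> \<le> \<delta> * sqrt (exp (1 + 2 * K1))
      + sqrt (1 / real n) * sqrt ((1/2 * K2\<^sup>2 + 17/2 * K1\<^sup>2 * K3\<^sup>2 + 5 * K1 * K2 * K3)
                                * (exp (1 + K1\<^sup>2) - 1) / (1 + K1\<^sup>2))"
    using discretization_error_le[OF n_pos] exp_mult_le_sqrt_exp[OF delta_nonneg, of K1] by linarith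
  ultimately show ?thesis
    using ennreal_leI order_trans by blast
qed

end
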